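(* Let $k$, $n$, and $d$ be positive integers with $n\geq 2d$, $\gcd(n,d)=1$, and $\frac{n}{d}<k$. If $G$ is a finite, simple, undirected, connected graph with $\chi(G)=k$ and $\chi_c(G)=\frac{n}{d}$, then $G$ has a $k$-coloring $f$ such that (1) for at least $\left(\frac{\chi(G)(\chi_c(G)+1-\chi(G))}{\chi_c(G)}\right)|V(G)|$ vertices $u$ of $G$, some full $f$-rainbow path begins at $u$, and (2) for each of the remaining vertices $v$ of $G$, some $f$-rainbow path of order $k-1$ begins at $v$.
   Context: For a positive integer $k$, $[k]=\{1,\dots,k\}$. A $k$-coloring of $G$ is a function $f:V(G)\to[k]$ with $f(u)\neq f(v)$ for every two adjacent vertices $u,v$; $\chi(G)$ is the minimum $k$ for which a $k$-coloring exists. For positive integers $n,d$ with $n\ge 2d$ and $\gcd(n,d)=1$, an $(n,d)$-coloring of $G$ is a function $c:V(G)\to[n]$ with $d\le |c(u)-c(v)|\le n-d$ for every two adjacent vertices $u,v$. The circular chromatic number $\chi_c(G)$ is the infimum (in fact a minimum) of $n/d$ over all $(n,d)$-colorings of $G$. For a $k$-coloring $f$, an $f$-rainbow path is a path in $G$ whose vertices have pairwise distinct colors under $f$; it is full if it has order (number of vertices) $k$. A path begins at $u$ if $u$ is one of its end vertices. *)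

theory Defs
  imports Complex_Main
begin

definition simple_graph :: "'a set \<Rightarrow> ('a \<Rightarrow> 'a \<Rightarrow> bool) \<Rightarrow> bool" where
  "simple_graph V E \<longleftrightarrow> finite V \<and>
     (\<forall>u v. E u v \<longrightarrow> u \<in> V \<and> v \<in> V \<and> u \<noteq> v \<and> E v u)"

text \<open>A path, given as the (nonempty) list of its distinct vertices in order;
its order is the length of the list.\<close>
definition is_path :: "'a set \<Rightarrow> ('a \<Rightarrow> 'a \<Rightarrow> bool) \<Rightarrow> 'a list \<Rightarrow> bool" where
  "is_path V E ps \<longleftrightarrow> ps \<noteq> [] \<and> distinct ps \<and> set ps \<subseteq> V \<and>
     (\<forall>i. Suc i < length ps \<longrightarrow> E (ps ! i) (ps ! Suc i))"

definition connected_graph :: "'a set \<Rightarrow> ('a \<Rightarrow> 'a \<Rightarrow> bool) \<Rightarrow> bool" where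
  "connected_graph V E \<longleftrightarrow> V \<noteq> {} \<and>
     (\<forall>u\<in>V. \<forall>v\<in>V. \<exists>ps. is_path V E ps \<and> hd ps = u \<and> last ps = v)"

definition coloring :: "'a set \<Rightarrow> ('a \<Rightarrow> 'a \<Rightarrow> bool) \<Rightarrow> nat \<Rightarrow> ('a \<Rightarrow> nat) \<Rightarrow> bool" where
  "coloring V E k f \<longleftrightarrow> (\<forall>v\<in>V. f v \<in> {1..k}) \<and>
     (\<forall>u\<in>V. \<forall>v\<in>V. E u v \<longrightarrow> f u \<noteq> f v)"

definition chromatic_number :: "'a set \<Rightarrow> ('a \<Rightarrow> 'a \<Rightarrow> bool) \<Rightarrow> nat" where
  "chromatic_number V E = (LEAST k. \<exists>f. coloring V E k f)"

definition nd_coloring :: "'a set \<Rightarrow> ('a \<Rightarrow> 'a \<Rightarrow> bool) \<Rightarrow> nat \<Rightarrow> nat \<Rightarrow> ('a \<Rightarrow> nat) \<Rightarrow> bool" where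
  "nd_coloring V E n d c \<longleftrightarrow> (\<forall>v\<in>V. c v \<in> {1..n}) \<and>
     (\<forall>u\<in>V. \<forall>v\<in>V. E u v \<longrightarrow>
        int d \<le> \<bar>int (c u) - int (c v)\<bar> \<and> \<bar>int (c u) - int (c v)\<bar> \<le> int n - int d)"

definition circular_chromatic_number :: "'a set \<Rightarrow> ('a \<Rightarrow> 'a \<Rightarrow> bool) \<Rightarrow> real" where
  "circular_chromatic_number V E =
     Inf {real n / real d | n d. 0 < n \<and> 0 < d \<and> 2 * d \<le> n \<and> gcd n d = 1 \<and>
                               (\<exists>c. nd_coloring V E n d c)}"

definition rainbow_path :: "'a set \<Rightarrow> ('a \<Rightarrow> 'a \<Rightarrow> bool) \<Rightarrow> ('a \<Rightarrow> nat) \<Rightarrow> 'a list \<Rightarrow> bool" where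
  "rainbow_path V E f ps \<longleftrightarrow> is_path V E ps \<and> inj_on f (set ps)"

definition begins_at :: "'a list \<Rightarrow> 'a \<Rightarrow> bool" where
  "begins_at ps u \<longleftrightarrow> ps \<noteq> [] \<and> (hd ps = u \<or> last ps = u)"

end

theory Submission
  imports Defs
begin

text \<open>
  Let the circular chromatic number be attained by an (n0,d0)-coloring c; it is a minimum
  because a numerator larger than |V| leaves a color unused and can then be lowered. Call an
  edge u->v tight if c v - c u = d0 (mod n0). Optimality of n0/d0 lets us assume that an
  infinite walk of tight edges starts at every vertex: if none did, scaling c and subtracting
  the lengths of longest tight walks would give a smaller ratio, and if only some did, rotating
  the colors of the others would enlarge their set.

  Rotating c by t and cutting the circle into blocks of d0 colors gives a k-coloring f_t, since
  n0 < k d0. Along a tight walk each color lies one block ahead of the previous one, so the first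
  k - 1 vertices of a tight walk form an f_t-rainbow path, and so do the first k whenever the
  rotated color of the start lies among the first L = n0 - (k-1) d0 colors of its block. Every
  vertex satisfies this for at least k L of the n0 rotations, so some t serves at least
  k L |V| / n0 = chi (chi_c + 1 - chi) / chi_c |V| vertices.
\<close>

definition circ_far :: "nat \<Rightarrow> nat \<Rightarrow> int \<Rightarrow> bool" where
  "circ_far n d z \<longleftrightarrow> int d \<le> z mod int n \<and> z mod int n \<le> int n - int d"

lemma circ_far_iff_abs:
  assumes "0 < d" "\<bar>z\<bar> < int n"
  shows "circ_far n d z \<longleftrightarrow> int d \<le> \<bar>z\<bar> \<and> \<bar>z\<bar> \<le> int n - int d"
proof (cases "0 \<le> z")
  case True
  then have "z mod int n = z" using assms by simp
  then show ?thesis using True by (simp add: circ_far_def)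
next
  case False
  then have "(z + int n) mod int n = z + int n" using assms by (intro mod_pos_pos_trivial) auto
  then have "z mod int n = z + int n" by simp
  then show ?thesis using False assms by (auto simp: circ_far_def)
qed

lemma circ_far_mod_cong: "z mod int n = z' mod int n \<Longrightarrow> circ_far n d z = circ_far n d z'"
  by (simp add: circ_far_def)

lemma circ_far_uminus: "0 < d \<Longrightarrow> circ_far n d (- z) = circ_far n d z"
  by (auto simp: circ_far_def zmod_zminus1_eq_if)

lemma circ_far_multiple:
  assumes "0 < d" "1 \<le> m" "(m + 1) * d \<le> n"
  shows "circ_far n d (int m * int d)"
proof -
  have "int m * int d mod int n = int m * int d"
    using assms by (intro mod_pos_pos_trivial) (auto simp flip: of_nat_mult)
  then show ?thesis using assms unfolding circ_far_def by (simp flip: of_nat_mult add: algebra_simps)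
qed

lemma nd_coloring_iff_circ_far:
  assumes "0 < d"
  shows "nd_coloring V E n d c \<longleftrightarrow> (\<forall>v\<in>V. c v \<in> {1..n}) \<and>
           (\<forall>u\<in>V. \<forall>v\<in>V. E u v \<longrightarrow> circ_far n d (int (c u) - int (c v)))"
proof -
  have abs: "circ_far n d (int (c u) - int (c v)) \<longleftrightarrow>
      int d \<le> \<bar>int (c u) - int (c v)\<bar> \<and> \<bar>int (c u) - int (c v)\<bar> \<le> int n - int d"
    if "c u \<in> {1..n}" "c v \<in> {1..n}" for u v
    by (rule circ_far_iff_abs[OF assms]) (use that in auto)
  show ?thesis
    unfolding nd_coloring_def by (auto simp: abs)
qed

lemma nd_coloring_range: "nd_coloring V E n d c \<Longrightarrow> v \<in> V \<Longrightarrow> c v \<in> {1..n}"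
  by (simp add: nd_coloring_def)

lemma nd_coloring_circ_far:
  assumes "nd_coloring V E n d c" "0 < d" "u \<in> V" "v \<in> V" "E u v"
  shows "circ_far n d (int (c u) - int (c v))"
  using assms nd_coloring_iff_circ_far[of d V E n c] by simp

lemma nd_coloring_two_d_le:
  assumes "nd_coloring V E n d c" "E u v" "u \<in> V" "v \<in> V"
  shows "2 * d \<le> n"
  using assms unfolding nd_coloring_def by fastforce

lemma zdiv_less_of_less_mult:
  fixes a b k :: int
  assumes "0 < b" "a < k * b"
  shows "a div b < k"
proof -
  have "a div b * b \<le> a" using assms(1) by (simp add: minus_mod_eq_div_mult[symmetric])
  then have "a div b * b < k * b" using assms(2) by linarith
  then show ?thesis using assms(1) by simp
qed

lemma div_neq_if_circ_far:
  fixes x y :: int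
  assumes "0 < d" "0 \<le> x" "x < int n" "0 \<le> y" "y < int n" "circ_far n d (y - x)"
  shows "x div int d \<noteq> y div int d"
proof
  assume eq: "x div int d = y div int d"
  have "int d \<le> \<bar>y - x\<bar>" using assms circ_far_iff_abs[of d "y - x" n] by auto
  moreover have "y - x = y mod int d - x mod int d"
    using div_mult_mod_eq[of x "int d"] div_mult_mod_eq[of y "int d"] unfolding eq by linarith
  moreover have "0 \<le> x mod int d" "x mod int d < int d" "0 \<le> y mod int d" "y mod int d < int d"
    using assms by auto
  ultimately show False by linarith
qed

lemma div_shift_changes_block:
  fixes K D L x :: int
  assumes "0 < D" "0 < L" "L < D" "1 \<le> K" "0 \<le> x" "x < K * D + L" "x mod D < L"
  shows "x div D \<noteq> ((x + K * D) mod (K * D + L)) div D"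
proof (cases "x < L")
  case True
  then have "(x + K * D) mod (K * D + L) = x + K * D" using assms by (intro mod_pos_pos_trivial) auto
  then show ?thesis using assms True by simp
next
  case False
  have "(x + K * D) mod (K * D + L) = (x - L + (K * D + L)) mod (K * D + L)" by simp
  also have "\<dots> = (x - L) mod (K * D + L)" by (rule mod_add_self2)
  also have "\<dots> = x - L" using assms False by (intro mod_pos_pos_trivial) auto
  finally have "(x + K * D) mod (K * D + L) = x - L" .
  moreover have "x - L = (x mod D + D - L) + (x div D - 1) * D"
    by (simp add: algebra_simps)
  moreover have "(x mod D + D - L) div D = 0"
    using assms pos_mod_bound[of D x] pos_mod_sign[of D x] by (intro div_pos_pos_trivial) linarith+
  ultimately show ?thesis using assms by simp
qed

lemma card_shifts_mod_less:
  fixes x :: int and n d l m :: nat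
  assumes d: "0 < d" and l: "l \<le> d" and n: "n = m * d + l"
  shows "(m + 1) * l \<le> card {t \<in> {0..<int n}. (x - t) mod int n mod int d < int l}"
proof -
  define g where "g = (\<lambda>(j, y). (x - (int j * int d + int y)) mod int n)"
  have pos: "(x - g (j, y)) mod int n = int j * int d + int y" if "j < m + 1" "y < l" for j y
  proof -
    have "j * d \<le> m * d" using that by simp
    then have "j * d + y < n" using that n by linarith
    then have "int j * int d + int y < int n" by (simp flip: of_nat_mult of_nat_add)
    moreover have "(x - g (j, y)) mod int n = (int j * int d + int y) mod int n"
      unfolding g_def by (simp add: mod_diff_right_eq)
    ultimately show ?thesis by simp
  qed
  have "g ` ({..<m + 1} \<times> {..<l}) \<subseteq> {t \<in> {0..<int n}. (x - t) mod int n mod int d < int l}"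
  proof
    fix t assume "t \<in> g ` ({..<m + 1} \<times> {..<l})"
    then obtain j y where jy: "j < m + 1" "y < l" "t = g (j, y)" by auto
    have "0 < n" using jy(2) n by simp
    then have "t \<in> {0..<int n}" unfolding jy(3) g_def by simp
    moreover have "(x - t) mod int n mod int d < int l"
      using pos[OF jy(1,2)] jy(2) l unfolding jy(3) by simp
    ultimately show "t \<in> {t \<in> {0..<int n}. (x - t) mod int n mod int d < int l}" by simp
  qed
  moreover have "inj_on g ({..<m + 1} \<times> {..<l})"
  proof (rule inj_onI, clarify)
    fix j y j' y' assume "j < m + 1" "y < l" "j' < m + 1" "y' < l" "g (j, y) = g (j', y')"
    then have "j * d + y = j' * d + y'" using pos by (metis of_nat_add of_nat_eq_iff of_nat_mult)
    moreover have "y < d" "y' < d" using \<open>y < l\<close> \<open>y' < l\<close> l by simp_all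
    ultimately have "y = y'" by (metis mod_mult_self3 mod_less)
    then show "j = j' \<and> y = y'" using d \<open>j * d + y = j' * d + y'\<close> by simp
  qed
  ultimately have "card (g ` ({..<m + 1} \<times> {..<l}))
    \<le> card {t \<in> {0..<int n}. (x - t) mod int n mod int d < int l}"
    by (intro card_mono) (auto intro: finite_subset[of _ "{0..<int n}"])
  then show ?thesis using \<open>inj_on g _\<close> by (simp add: card_image card_cartesian_product)
qed

lemma sum_card_filter_swap:
  assumes "finite V" "finite T"
  shows "(\<Sum>t\<in>T. card {v \<in> V. P t v}) = (\<Sum>v\<in>V. card {t \<in> T. P t v})"
proof -
  have "(\<Sum>t\<in>T. card {v \<in> V. P t v}) = (\<Sum>t\<in>T. \<Sum>v\<in>V. if P t v then 1 else 0)"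
    using assms(1) by (simp add: sum.inter_filter[symmetric])
  also have "\<dots> = (\<Sum>v\<in>V. \<Sum>t\<in>T. if P t v then 1 else 0)" by (rule sum.swap)
  also have "\<dots> = (\<Sum>v\<in>V. card {t \<in> T. P t v})" using assms(2) by (simp add: sum.inter_filter[symmetric])
  finally show ?thesis .
qed

lemma exists_row_above_average:
  assumes "finite V" "finite T" "T \<noteq> {}" "\<And>v. v \<in> V \<Longrightarrow> a \<le> card {t \<in> T. P t v}"
  shows "\<exists>t\<in>T. card V * a \<le> card {v \<in> V. P t v} * card T"
proof (rule ccontr)
  assume "\<not> ?thesis"
  then have below: "card {v \<in> V. P t v} * card T < card V * a" if "t \<in> T" for t
    using that by auto
  have "card T * (card V * a) = card T * (\<Sum>v\<in>V. a)" by simp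
  also have "\<dots> \<le> card T * (\<Sum>v\<in>V. card {t \<in> T. P t v})"
    using assms(4) by (intro mult_left_mono sum_mono) auto
  also have "\<dots> = (\<Sum>t\<in>T. card {v \<in> V. P t v} * card T)"
    unfolding sum_card_filter_swap[OF assms(1,2), of P, symmetric] by (simp add: sum_distrib_left mult.commute)
  also have "\<dots> < (\<Sum>t\<in>T. card V * a)"
    using below assms(2,3) by (intro sum_strict_mono) auto
  also have "\<dots> = card T * (card V * a)" by simp
  finally show False by simp
qed

lemma simple_graph_edgeD:
  assumes "simple_graph V E" "E u v"
  shows "u \<in> V" "v \<in> V" "E v u"
  using assms unfolding simple_graph_def by blast+

lemma list_crossing_index:
  assumes "ps \<noteq> []" "hd ps \<notin> A" "last ps \<in> A"
  shows "\<exists>i. Suc i < length ps \<and> ps ! i \<notin> A \<and> ps ! Suc i \<in> A"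
  using assms
proof (induction ps)
  case Nil
  then show ?case by simp
next
  case (Cons x xs)
  show ?case
  proof (cases "xs \<noteq> [] \<and> hd xs \<notin> A")
    case True
    then obtain i where "Suc i < length xs" "xs ! i \<notin> A" "xs ! Suc i \<in> A"
      using Cons by auto
    then show ?thesis by (intro exI[of _ "Suc i"]) simp
  next
    case False
    then show ?thesis using Cons.prems by (intro exI[of _ 0]) (auto simp: hd_conv_nth split: if_splits)
  qed
qed

lemma connected_graph_cut_edge:
  assumes "connected_graph V E" "a \<in> V \<inter> A" "b \<in> V - A"
  shows "\<exists>x\<in>V - A. \<exists>w\<in>V \<inter> A. E x w"
proof -
  obtain ps where ps: "is_path V E ps" "hd ps = b" "last ps = a"
    using assms unfolding connected_graph_def by blast
  then obtain i where i: "Suc i < length ps" "ps ! i \<notin> A" "ps ! Suc i \<in> A"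
    using list_crossing_index[of ps A] assms unfolding is_path_def by auto
  then have "ps ! i \<in> V" "ps ! Suc i \<in> V" "E (ps ! i) (ps ! Suc i)"
    using ps(1) unfolding is_path_def by (auto dest: nth_mem)
  then show ?thesis using i by blast
qed

lemma chromatic_number_coloring:
  assumes "simple_graph V E"
  shows "\<exists>f. coloring V E (chromatic_number V E) f"
proof -
  have "finite V" using assms unfolding simple_graph_def by blast
  then obtain h where h: "bij_betw h V {0..<card V}" using ex_bij_betw_finite_nat by blast
  have "coloring V E (card V) (\<lambda>v. h v + 1)"
    unfolding coloring_def
  proof (intro conjI ballI impI)
    fix v assume "v \<in> V"
    then have "h v < card V" using bij_betw_apply[OF h] by simp
    then show "h v + 1 \<in> {1..card V}" by simp
  next
    fix u v assume "u \<in> V" "v \<in> V" "E u v"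
    moreover from this have "u \<noteq> v" using assms unfolding simple_graph_def by blast
    ultimately show "h u + 1 \<noteq> h v + 1" using h by (auto simp: bij_betw_def inj_on_def)
  qed
  then have "\<exists>k f. coloring V E k f" by blast
  then show ?thesis unfolding chromatic_number_def by (rule LeastI_ex)
qed

lemma not_coloring_below_chromatic_number:
  "m < chromatic_number V E \<Longrightarrow> \<not> coloring V E m f"
  unfolding chromatic_number_def by (blast dest: not_less_Least)

lemma edge_if_chromatic_number_ge_2:
  assumes "2 \<le> chromatic_number V E"
  shows "\<exists>u v. E u v"
proof (rule ccontr)
  assume "\<not> ?thesis"
  then have "coloring V E 1 (\<lambda>_. 1)" unfolding coloring_def by simp
  then show False using assms not_coloring_below_chromatic_number[of 1] by force
qed

definition nd_colorable :: "'a set \<Rightarrow> ('a \<Rightarrow> 'a \<Rightarrow> bool) \<Rightarrow> nat \<Rightarrow> nat \<Rightarrow> bool" where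
  "nd_colorable V E n d \<longleftrightarrow> 0 < n \<and> 0 < d \<and> 2 * d \<le> n \<and> gcd n d = 1 \<and> (\<exists>c. nd_coloring V E n d c)"

lemma nd_colorable_of_coloring:
  assumes "coloring V E k f" "2 \<le> k"
  shows "nd_colorable V E k 1"
proof -
  have "nd_coloring V E k 1 f"
    unfolding nd_coloring_def
  proof (rule conjI; intro ballI impI)
    fix v assume "v \<in> V"
    then show "f v \<in> {1..k}" using assms(1) unfolding coloring_def by blast
  next
    fix u v assume "u \<in> V" "v \<in> V" "E u v"
    then have "f u \<noteq> f v" "f u \<in> {1..k}" "f v \<in> {1..k}" using assms(1) unfolding coloring_def by blast+
    then show "int 1 \<le> \<bar>int (f u) - int (f v)\<bar> \<and> \<bar>int (f u) - int (f v)\<bar> \<le> int k - int 1" by auto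
  qed
  then show ?thesis using assms(2) unfolding nd_colorable_def by auto
qed

lemma nd_coloring_of_oriented_gaps:
  fixes key :: "'a \<Rightarrow> 'b::linorder"
  assumes sg: "simple_graph V E"
    and range: "\<And>v. v \<in> V \<Longrightarrow> c v \<in> {1..n}"
    and key: "\<And>u v. u \<in> V \<Longrightarrow> v \<in> V \<Longrightarrow> E u v \<Longrightarrow> key u \<noteq> key v"
    and gap: "\<And>u v. u \<in> V \<Longrightarrow> v \<in> V \<Longrightarrow> E u v \<Longrightarrow> key v < key u \<Longrightarrow>
      int d \<le> int (c u) - int (c v) \<and> int (c u) - int (c v) \<le> int n - int d"
  shows "nd_coloring V E n d c"
  unfolding nd_coloring_def
proof (rule conjI; intro ballI impI)
  fix v assume "v \<in> V"
  then show "c v \<in> {1..n}" by (rule range)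
next
  fix u v assume uv: "u \<in> V" "v \<in> V" "E u v"
  consider "key v < key u" | "key u < key v" using key[OF uv] by (meson linorder_neqE)
  then show "int d \<le> \<bar>int (c u) - int (c v)\<bar> \<and> \<bar>int (c u) - int (c v)\<bar> \<le> int n - int d"
  proof cases
    case 1
    then show ?thesis using gap[OF uv] of_nat_0_le_iff[of d] by linarith
  next
    case 2
    then show ?thesis using gap[OF uv(2,1) simple_graph_edgeD(3)[OF sg uv(3)]]
      of_nat_0_le_iff[of d] by linarith
  qed
qed

lemma rainbow_path_of_walk:
  assumes sg: "simple_graph V E" and walk: "\<forall>i. E (s i) (s (Suc i))" and m: "0 < m"
    and rainbow: "\<And>i j. i < j \<Longrightarrow> j < m \<Longrightarrow> g (s i) \<noteq> g (s j)"
  shows "\<exists>ps. rainbow_path V E g ps \<and> length ps = m \<and> begins_at ps (s 0)"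
proof -
  have inj: "inj_on (g \<circ> s) {0..<m}"
  proof (rule inj_onI)
    fix i j assume "i \<in> {0..<m}" "j \<in> {0..<m}" "(g \<circ> s) i = (g \<circ> s) j"
    then show "i = j" using rainbow[of i j] rainbow[of j i] by (cases i j rule: linorder_cases) auto
  qed
  let ?ps = "map s [0..<m]"
  have "s i \<in> V" for i using walk simple_graph_edgeD(1)[OF sg] by blast
  moreover have "distinct ?ps" using inj_on_imageI2[OF inj] by (simp add: distinct_map)
  moreover have "inj_on g (set ?ps)" using inj_on_imageI[OF inj] by simp
  moreover have "hd ?ps = s 0" using m by (simp add: hd_map)
  ultimately have "rainbow_path V E g ?ps \<and> begins_at ?ps (s 0)"
    using m walk unfolding rainbow_path_def is_path_def begins_at_def by auto
  then show ?thesis by (intro exI[of _ ?ps]) simp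
qed

section \<open>Tight walks\<close>

definition tight_edge :: "('a \<Rightarrow> 'a \<Rightarrow> bool) \<Rightarrow> nat \<Rightarrow> nat \<Rightarrow> ('a \<Rightarrow> nat) \<Rightarrow> 'a \<Rightarrow> 'a \<Rightarrow> bool" where
  "tight_edge E n d c u v \<longleftrightarrow> E u v \<and> (int (c v) - int (c u)) mod int n = int d"

definition tight_walk ::
    "('a \<Rightarrow> 'a \<Rightarrow> bool) \<Rightarrow> nat \<Rightarrow> nat \<Rightarrow> ('a \<Rightarrow> nat) \<Rightarrow> (nat \<Rightarrow> 'a) \<Rightarrow> nat \<Rightarrow> bool" where
  "tight_walk E n d c s m \<longleftrightarrow> (\<forall>q<m. tight_edge E n d c (s q) (s (Suc q)))"

text \<open>In a finite graph these are the vertices from which a cycle of tight edges can be reached.\<close>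
definition tight_reach :: "('a \<Rightarrow> 'a \<Rightarrow> bool) \<Rightarrow> nat \<Rightarrow> nat \<Rightarrow> ('a \<Rightarrow> nat) \<Rightarrow> 'a set" where
  "tight_reach E n d c = {v. \<exists>s. s 0 = v \<and> (\<forall>i. tight_edge E n d c (s i) (s (Suc i)))}"

lemma tight_reach_prepend:
  assumes "tight_edge E n d c u w" "w \<in> tight_reach E n d c"
  shows "u \<in> tight_reach E n d c"
proof -
  obtain s where "s 0 = w" "\<forall>i. tight_edge E n d c (s i) (s (Suc i))"
    using assms(2) unfolding tight_reach_def by blast
  then have "\<forall>i. tight_edge E n d c (case_nat u s i) (case_nat u s (Suc i))"
    using assms(1) by (simp split: nat.split)
  then show ?thesis unfolding tight_reach_def
    by (intro CollectI exI[of _ "case_nat u s"]) simp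
qed

lemma tight_reach_walk_vertex:
  assumes "\<forall>i. tight_edge E n d c (s i) (s (Suc i))"
  shows "s i \<in> tight_reach E n d c"
  using assms unfolding tight_reach_def
  by (intro CollectI exI[of _ "\<lambda>q. s (i + q)"]) simp

lemma tight_reach_closed_walk:
  assumes w: "tight_walk E n d c s m" and ij: "i < j" "j \<le> m" and eq: "s i = s j"
  shows "s i \<in> tight_reach E n d c"
proof -
  define p where "p = j - i"
  have p: "0 < p" "i + p = j" using ij p_def by simp_all
  define s' where "s' q = s (i + q mod p)" for q
  have "tight_edge E n d c (s' q) (s' (Suc q))" for q
  proof -
    have "i + q mod p < m" using p ij mod_less_divisor[of p q] by linarith
    then have "tight_edge E n d c (s (i + q mod p)) (s (Suc (i + q mod p)))"
      using w unfolding tight_walk_def by blast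
    moreover have "s' (Suc q) = s (Suc (i + q mod p))"
      using p eq mod_less_divisor[of p q] unfolding s'_def by (auto simp: mod_Suc simp flip: add_Suc_right)
    ultimately show ?thesis unfolding s'_def by simp
  qed
  then have "s' 0 \<in> tight_reach E n d c" by (intro tight_reach_walk_vertex allI)
  then show ?thesis unfolding s'_def by simp
qed

lemma tight_walk_shorter_than_card:
  assumes sg: "simple_graph V E" and disj: "V \<inter> tight_reach E n d c = {}"
    and v: "s 0 \<in> V" and w: "tight_walk E n d c s m"
  shows "m < card V"
proof (rule ccontr)
  assume "\<not> m < card V"
  then have big: "card V < card {0..m}" by simp
  have "s q \<in> V" if "q \<le> m" for q
  proof (cases q)
    case (Suc p)
    then have "E (s p) (s q)" using that w unfolding tight_walk_def tight_edge_def by auto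
    then show ?thesis using simple_graph_edgeD(2)[OF sg] by blast
  qed (use v in simp)
  then have "s ` {0..m} \<subseteq> V" by auto
  then have "\<not> inj_on s {0..m}"
    using card_inj_on_le[of s "{0..m}" V] big sg unfolding simple_graph_def by auto
  then obtain i j where ij: "i < j" "j \<le> m" "s i = s j"
    unfolding inj_on_def by (metis atLeastAtMost_iff linorder_neqE_nat)
  then have "s i \<in> tight_reach E n d c" using tight_reach_closed_walk[OF w] by blast
  moreover have "s i \<in> V" using \<open>s ` {0..m} \<subseteq> V\<close> ij by auto
  ultimately show False using disj by blast
qed

lemma tight_walk_color_diff:
  assumes "\<forall>i. tight_edge E n d c (s i) (s (Suc i))"
  shows "(int (c (s (i + j))) - int (c (s i))) mod int n = (int j * int d) mod int n"
proof (induction j)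
  case 0
  then show ?case by simp
next
  case (Suc j)
  have "int (c (s (i + Suc j))) - int (c (s i)) =
     (int (c (s (Suc (i + j)))) - int (c (s (i + j)))) + (int (c (s (i + j))) - int (c (s i)))"
    by simp
  also have "\<dots> mod int n = (int d + int j * int d) mod int n"
    using assms Suc.IH unfolding tight_edge_def by (metis mod_add_cong mod_mod_trivial)
  finally show ?case by (simp add: algebra_simps)
qed

lemma tight_walk_position:
  fixes t :: int
  assumes walk: "\<forall>i. tight_edge E n d c (s i) (s (Suc i))" and ij: "i \<le> j"
  shows "(int (c (s j)) - t) mod int n = ((int (c (s i)) - t) mod int n + int (j - i) * int d) mod int n"
proof -
  have "i + (j - i) = j" using ij by simp
  then have diff: "(int (c (s j)) - int (c (s i))) mod int n = int (j - i) * int d mod int n"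
    using tight_walk_color_diff[OF walk, of i "j - i"] by simp
  have "(int (c (s j)) - t) mod int n = ((int (c (s j)) - int (c (s i))) + (int (c (s i)) - t)) mod int n"
    by simp
  also have "\<dots> = ((int (c (s j)) - int (c (s i))) mod int n + (int (c (s i)) - t)) mod int n"
    by (rule mod_add_left_eq[symmetric])
  also have "\<dots> = (int (j - i) * int d + (int (c (s i)) - t)) mod int n"
    unfolding diff by (rule mod_add_left_eq)
  also have "\<dots> = (int (j - i) * int d + (int (c (s i)) - t) mod int n) mod int n"
    by (rule mod_add_right_eq[symmetric])
  finally show ?thesis by (simp add: add.commute)
qed

lemma tight_reach_entering_slack:
  assumes sg: "simple_graph V E" and c: "nd_coloring V E n d c" and d: "0 < d"
    and xw: "x \<in> V" "w \<in> V" "E x w" "x \<notin> tight_reach E n d c" "w \<in> tight_reach E n d c"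
  shows "int d < (int (c w) - int (c x)) mod int n"
proof -
  have "\<not> tight_edge E n d c x w" using tight_reach_prepend xw(4,5) by metis
  then have "(int (c w) - int (c x)) mod int n \<noteq> int d" using xw(3) unfolding tight_edge_def by simp
  moreover have "circ_far n d (int (c w) - int (c x))"
    using nd_coloring_circ_far[OF c d xw(2,1) simple_graph_edgeD(3)[OF sg xw(3)]] .
  ultimately show ?thesis unfolding circ_far_def by simp
qed

lemma tight_reach_mono_on:
  assumes "\<And>v. v \<in> tight_reach E n d c \<Longrightarrow> c' v = c v"
  shows "tight_reach E n d c \<subseteq> tight_reach E n d c'"
proof
  fix v assume "v \<in> tight_reach E n d c"
  then obtain s where s: "s 0 = v" "\<forall>i. tight_edge E n d c (s i) (s (Suc i))"
    unfolding tight_reach_def by blast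
  then have "c' (s i) = c (s i)" for i using assms tight_reach_walk_vertex by blast
  then have "\<forall>i. tight_edge E n d c' (s i) (s (Suc i))" using s(2) unfolding tight_edge_def by simp
  then show "v \<in> tight_reach E n d c'"
    using s(1) unfolding tight_reach_def by blast
qed

section \<open>Block colorings\<close>

text \<open>Rotate the circle of colors by t and cut it into consecutive blocks of d colors.\<close>
definition block_coloring :: "nat \<Rightarrow> nat \<Rightarrow> ('a \<Rightarrow> nat) \<Rightarrow> int \<Rightarrow> 'a \<Rightarrow> nat" where
  "block_coloring n d c t v = nat (((int (c v) - t) mod int n) div int d) + 1"

lemma block_coloring_neq:
  assumes "0 < d" "0 < n" "circ_far n d (int (c u) - int (c v))"
  shows "block_coloring n d c t u \<noteq> block_coloring n d c t v"
proof -
  let ?x = "(int (c v) - t) mod int n" and ?y = "(int (c u) - t) mod int n"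
  have "circ_far n d (?y - ?x)"
    using assms(3) by (rule circ_far_mod_cong[THEN iffD1, rotated]) (simp add: mod_diff_eq)
  then have "?x div int d \<noteq> ?y div int d" using assms by (intro div_neq_if_circ_far) auto
  then show ?thesis using assms unfolding block_coloring_def
    by (simp add: eq_nat_nat_iff pos_imp_zdiv_nonneg_iff)
qed

lemma block_coloring_coloring:
  assumes c: "nd_coloring V E n d c" and d: "0 < d" and n: "0 < n" and k: "n \<le> k * d"
  shows "coloring V E k (block_coloring n d c t)"
  unfolding coloring_def
proof (intro conjI ballI impI)
  fix v
  have "(int (c v) - t) mod int n < int n" using n by simp
  also have "\<dots> \<le> int k * int d" using k by (simp flip: of_nat_mult)
  finally have "(int (c v) - t) mod int n div int d < int k" using d by (simp add: zdiv_less_of_less_mult)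
  moreover have "0 \<le> (int (c v) - t) mod int n div int d" using n d by (simp add: pos_imp_zdiv_nonneg_iff)
  ultimately show "block_coloring n d c t v \<in> {1..k}" unfolding block_coloring_def by auto
next
  fix u v assume "u \<in> V" "v \<in> V" "E u v"
  then show "block_coloring n d c t u \<noteq> block_coloring n d c t v"
    by (intro block_coloring_neq[OF d n] nd_coloring_circ_far[OF c d])
qed

lemma chromatic_number_le_of_nd_coloring:
  assumes "nd_coloring V E n d c" "0 < d" "0 < n" "n \<le> m * d"
  shows "chromatic_number V E \<le> m"
  using block_coloring_coloring[OF assms, of 0] not_coloring_below_chromatic_number[of m V E] by (meson not_le)

lemma block_coloring_tight_walk_distinct:
  assumes d: "0 < d" and walk: "\<forall>i. tight_edge E n d c (s i) (s (Suc i))"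
    and ij: "i < j" "(j - i + 1) * d \<le> n"
  shows "block_coloring n d c t (s i) \<noteq> block_coloring n d c t (s j)"
proof -
  have n: "0 < n" using ij(2) d mult_le_mono1[of 1 "j - i + 1" d] by linarith
  have "circ_far n d (int (j - i) * int d)" using ij d by (intro circ_far_multiple) auto
  moreover have "(int (c (s j)) - int (c (s i))) mod int n = int (j - i) * int d mod int n"
    using tight_walk_color_diff[OF walk, of i "j - i"] ij by simp
  ultimately have "circ_far n d (int (c (s j)) - int (c (s i)))"
    using circ_far_mod_cong[of _ n "int (j - i) * int d" d] by blast
  then show ?thesis using block_coloring_neq[OF d n] by metis
qed

lemma block_coloring_tight_walk_wraps:
  fixes t :: int
  assumes d: "0 < d" and walk: "\<forall>i. tight_edge E n d c (s i) (s (Suc i))" and k: "2 \<le> k"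
    and lo: "(k - 1) * d < n" and hi: "n < k * d"
    and good: "((int (c (s 0)) - t) mod int n) mod int d < int n - int ((k - 1) * d)"
  shows "block_coloring n d c t (s 0) \<noteq> block_coloring n d c t (s (k - 1))"
proof -
  define x where "x = (int (c (s 0)) - t) mod int n"
  define K where "K = int (k - 1)"
  define L where "L = int n - int ((k - 1) * d)"
  have n: "0 < n" and N: "int n = K * int d + L" using lo unfolding K_def L_def by simp_all
  have pos: "(int (c (s (k - 1))) - t) mod int n = (x + K * int d) mod int n"
    using tight_walk_position[OF walk, of 0 "k - 1" t] unfolding x_def K_def by simp
  have "0 < L" using lo unfolding L_def by linarith
  moreover have "int n < int k * int d" using hi by (metis of_nat_less_iff of_nat_mult)
  then have "L < int d" using k unfolding L_def by (simp add: algebra_simps)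
  moreover have "1 \<le> K" using k unfolding K_def by simp
  moreover have x: "0 \<le> x" "x < K * int d + L" using n unfolding x_def N[symmetric] by simp_all
  moreover have "x mod int d < L" using good unfolding x_def L_def by simp
  ultimately have "x div int d \<noteq> (x + K * int d) mod (K * int d + L) div int d"
    using d by (intro div_shift_changes_block) simp_all
  then have "x div int d \<noteq> (x + K * int d) mod int n div int d" unfolding N .
  moreover have "0 \<le> (x + K * int d) mod int n" using n by simp
  ultimately show ?thesis using x d unfolding block_coloring_def pos x_def[symmetric]
    by (simp add: eq_nat_nat_iff pos_imp_zdiv_nonneg_iff)
qed

lemma block_coloring_rainbow_paths:
  fixes t :: int
  assumes sg: "simple_graph V E" and d: "0 < d" and k: "2 \<le> k"
    and lo: "(k - 1) * d < n" and hi: "n < k * d" and v: "v \<in> tight_reach E n d c"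
  shows "\<exists>ps. rainbow_path V E (block_coloring n d c t) ps \<and> length ps = k - 1 \<and> begins_at ps v"
    and "((int (c v) - t) mod int n) mod int d < int n - int ((k - 1) * d) \<Longrightarrow>
      \<exists>ps. rainbow_path V E (block_coloring n d c t) ps \<and> length ps = k \<and> begins_at ps v"
proof -
  obtain s where s0: "s 0 = v" and walk: "\<forall>i. tight_edge E n d c (s i) (s (Suc i))"
    using v unfolding tight_reach_def by blast
  have edges: "\<forall>i. E (s i) (s (Suc i))" using walk unfolding tight_edge_def by blast
  let ?f = "block_coloring n d c t"
  have near: "?f (s i) \<noteq> ?f (s j)" if "i < j" "j - i \<le> k - 2" for i j
  proof -
    have "(j - i + 1) * d \<le> (k - 1) * d" using that k by (intro mult_right_mono) auto
    then show ?thesis using block_coloring_tight_walk_distinct[OF d walk that(1)] lo by simp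
  qed
  show "\<exists>ps. rainbow_path V E ?f ps \<and> length ps = k - 1 \<and> begins_at ps v"
    using rainbow_path_of_walk[OF sg edges, of "k - 1" ?f] near k s0 by auto
  assume "((int (c v) - t) mod int n) mod int d < int n - int ((k - 1) * d)"
  then have wraps: "?f (s 0) \<noteq> ?f (s (k - 1))"
    using block_coloring_tight_walk_wraps[OF d walk k lo hi] s0 by simp
  have "?f (s i) \<noteq> ?f (s j)" if "i < j" "j < k" for i j
  proof (cases "j - i \<le> k - 2")
    case False
    then have "i = 0" "j = k - 1" using that by auto
    then show ?thesis using wraps by simp
  qed (use near that in blast)
  then show "\<exists>ps. rainbow_path V E ?f ps \<and> length ps = k \<and> begins_at ps v"
    using rainbow_path_of_walk[OF sg edges, of k ?f] k s0 by auto
qed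

lemma rainbow_coloring_of_tight_reach:
  assumes sg: "simple_graph V E" and c: "nd_coloring V E n d c" and d: "0 < d" and k: "2 \<le> k"
    and lo: "(k - 1) * d < n" and hi: "n < k * d" and reach: "V \<subseteq> tight_reach E n d c"
  shows "\<exists>f S. coloring V E k f \<and> S \<subseteq> V \<and> k * (n - (k - 1) * d) * card V \<le> card S * n \<and>
     (\<forall>u\<in>S. \<exists>ps. rainbow_path V E f ps \<and> length ps = k \<and> begins_at ps u) \<and>
     (\<forall>v\<in>V - S. \<exists>ps. rainbow_path V E f ps \<and> length ps = k - 1 \<and> begins_at ps v)"
proof -
  define l where "l = n - (k - 1) * d"
  define good where "good t v \<longleftrightarrow> (int (c v) - t) mod int n mod int d < int l" for t v
  have l: "l \<le> d" "n = (k - 1) * d + l" using lo hi k unfolding l_def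
    by (auto simp: diff_mult_distrib)
  have "k * l \<le> card {t \<in> {0..<int n}. good t v}" for v
    using card_shifts_mod_less[OF d l, of "int (c v)"] k unfolding good_def by simp
  moreover have "finite V" using sg unfolding simple_graph_def by blast
  ultimately obtain t where "card V * (k * l) \<le> card {v \<in> V. good t v} * card {0..<int n}"
    using exists_row_above_average[of V "{0..<int n}" "k * l" good] lo by fastforce
  then have count: "k * l * card V \<le> card {v \<in> V. good t v} * n" by (simp add: mult.commute)
  have "int l = int n - int ((k - 1) * d)" using lo unfolding l_def by simp
  then have paths: "(\<exists>ps. rainbow_path V E (block_coloring n d c t) ps \<and> length ps = k - 1 \<and> begins_at ps v) \<and>
      (good t v \<longrightarrow> (\<exists>ps. rainbow_path V E (block_coloring n d c t) ps \<and> length ps = k \<and> begins_at ps v))"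
    if "v \<in> V" for v
    using block_coloring_rainbow_paths[OF sg d k lo hi, where c = c and t = t and v = v]
      reach that unfolding good_def by auto
  have "coloring V E k (block_coloring n d c t)"
    using c d lo hi by (intro block_coloring_coloring) auto
  then show ?thesis
    using count paths unfolding l_def
    by (intro exI[of _ "block_coloring n d c t"] exI[of _ "{v \<in> V. good t v}"]) auto
qed

section \<open>Optimal colorings admit tight walks from every vertex\<close>

text \<open>Meaningful only when no tight cycle is reachable from v; otherwise the set under
  \<open>GREATEST\<close> is unbounded and the value is arbitrary.\<close>
definition longest_tight_walk :: "('a \<Rightarrow> 'a \<Rightarrow> bool) \<Rightarrow> nat \<Rightarrow> nat \<Rightarrow> ('a \<Rightarrow> nat) \<Rightarrow> 'a \<Rightarrow> nat" where
  "longest_tight_walk E n d c v = (GREATEST m. \<exists>s. s 0 = v \<and> tight_walk E n d c s m)"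

lemma longest_tight_walk_bounded:
  assumes sg: "simple_graph V E" and disj: "V \<inter> tight_reach E n d c = {}" and v: "v \<in> V"
  shows "\<exists>s. s 0 = v \<and> tight_walk E n d c s (longest_tight_walk E n d c v)"
    and "longest_tight_walk E n d c v < card V"
proof -
  have bound: "m < card V" if "\<exists>s. s 0 = v \<and> tight_walk E n d c s m" for m
    using that tight_walk_shorter_than_card[OF sg disj] v by blast
  have "\<exists>s. s 0 = v \<and> tight_walk E n d c s 0" by (intro exI[of _ "\<lambda>_. v"]) (simp add: tight_walk_def)
  then show walk: "\<exists>s. s 0 = v \<and> tight_walk E n d c s (longest_tight_walk E n d c v)"
    unfolding longest_tight_walk_def
    by (rule GreatestI_nat[where b = "card V"]) (use bound in \<open>fastforce intro: less_imp_le\<close>)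
  show "longest_tight_walk E n d c v < card V" using bound[OF walk] .
qed

lemma longest_tight_walk_step:
  assumes sg: "simple_graph V E" and disj: "V \<inter> tight_reach E n d c = {}"
    and t: "tight_edge E n d c u w"
  shows "longest_tight_walk E n d c w < longest_tight_walk E n d c u"
proof -
  have uw: "u \<in> V" "w \<in> V" using t simple_graph_edgeD[OF sg] unfolding tight_edge_def by blast+
  obtain s where "s 0 = w" "tight_walk E n d c s (longest_tight_walk E n d c w)"
    using longest_tight_walk_bounded(1)[OF sg disj uw(2)] by blast
  then have "tight_walk E n d c (case_nat u s) (longest_tight_walk E n d c w + 1)"
    using t unfolding tight_walk_def by (auto split: nat.split)
  then have "\<exists>s'. s' 0 = u \<and> tight_walk E n d c s' (longest_tight_walk E n d c w + 1)"
    by (intro exI[of _ "case_nat u s"]) simp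
  then have "longest_tight_walk E n d c w + 1 \<le> longest_tight_walk E n d c u"
    unfolding longest_tight_walk_def[of E n d c u]
    by (rule Greatest_le_nat[where b = "card V"])
      (use tight_walk_shorter_than_card[OF sg disj] uw in \<open>fastforce intro: less_imp_le\<close>)
  then show ?thesis by simp
qed

lemma refined_gap_bounds:
  fixes M a b d n \<delta> :: int
  assumes "0 \<le> a" "a < M" "0 \<le> b" "b < M" "d \<le> \<delta>" "\<delta> \<le> n - d"
    and "\<delta> = d \<Longrightarrow> a < b" and "\<delta> = n - d \<Longrightarrow> b < a"
  shows "M * d + 1 \<le> M * \<delta> - a + b \<and> M * \<delta> - a + b \<le> M * n - (M * d + 1)"
proof (cases "\<delta> = d \<or> \<delta> = n - d")
  case True
  have "d \<noteq> n - d"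
  proof
    assume "d = n - d"
    then have "a < b" "b < a" using True assms(7,8) by auto
    then show False by simp
  qed
  then have "d + 1 \<le> n - d" using assms(5,6) by linarith
  then have "M * (d + 1) \<le> M * (n - d)" using assms by (intro mult_left_mono) auto
  then show ?thesis using True assms by (auto simp: algebra_simps)
next
  case False
  then have "M * (d + 1) \<le> M * \<delta>" "M * \<delta> \<le> M * (n - d - 1)"
    using assms by (auto intro: mult_left_mono)
  then show ?thesis using assms(1-4) by (simp add: algebra_simps)
qed

text \<open>Scaling by M turns a tight edge u->w into a gap of exactly M d, and subtracting a potential
  L that strictly decreases along tight edges widens that gap by at least one.\<close>
lemma nd_coloring_refine:
  assumes sg: "simple_graph V E" and c: "nd_coloring V E n d c" and d: "0 < d"
    and L: "\<And>v. v \<in> V \<Longrightarrow> L v < M"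
    and tight: "\<And>u w. tight_edge E n d c u w \<Longrightarrow> L w < L u"
  shows "nd_coloring V E (n * M) (d * M + 1) (\<lambda>v. M * c v - L v)"
proof -
  have c': "int (M * c v - L v) = int M * int (c v) - int (L v)" and range: "M * c v - L v \<in> {1..n * M}"
    if "v \<in> V" for v
  proof -
    have "c v \<in> {1..n}" using nd_coloring_range[OF c that] .
    then have "M \<le> M * c v" "M * c v \<le> n * M" by simp_all
    moreover have "L v < M" using L[OF that] .
    ultimately have le: "L v < M * c v" "M * c v \<le> n * M" by linarith+
    then show "int (M * c v - L v) = int M * int (c v) - int (L v)" by (simp add: less_imp_le)
    show "M * c v - L v \<in> {1..n * M}" using le unfolding atLeastAtMost_iff by linarith
  qed
  have gap: "int (d * M + 1) \<le> int (M * c u - L u) - int (M * c v - L v) \<and>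
      int (M * c u - L u) - int (M * c v - L v) \<le> int (n * M) - int (d * M + 1)"
    if uv: "u \<in> V" "v \<in> V" "E u v" and less: "c v < c u" for u v
  proof -
    define \<delta> where "\<delta> = int (c u) - int (c v)"
    have "int d \<le> \<bar>\<delta>\<bar> \<and> \<bar>\<delta>\<bar> \<le> int n - int d"
      using c uv unfolding nd_coloring_def \<delta>_def by blast
    then have \<delta>: "int d \<le> \<delta>" "\<delta> \<le> int n - int d" using less unfolding \<delta>_def by auto
    have "int (L u) < int (L v)" if "\<delta> = int d"
    proof -
      have "(int (c u) - int (c v)) mod int n = int d"
        using that \<delta> d unfolding \<delta>_def by simp
      then show ?thesis using tight simple_graph_edgeD(3)[OF sg uv(3)] unfolding tight_edge_def by simp
    qed
    moreover have "int (L v) < int (L u)" if "\<delta> = int n - int d"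
    proof -
      have "int (c v) - int (c u) = int d - int n" using that unfolding \<delta>_def by simp
      then have "(int (c v) - int (c u)) mod int n = int d" using \<delta> d by simp
      then show ?thesis using tight uv(3) unfolding tight_edge_def by simp
    qed
    ultimately show ?thesis
      using refined_gap_bounds[of "int (L u)" "int M" "int (L v)" "int d" \<delta> "int n"] L uv \<delta>
      unfolding c'[OF uv(1)] c'[OF uv(2)] \<delta>_def by (simp add: algebra_simps)
  qed
  have proper: "c u \<noteq> c v" if "u \<in> V" "v \<in> V" "E u v" for u v
    using nd_coloring_circ_far[OF c d that] d unfolding circ_far_def by auto
  show ?thesis by (rule nd_coloring_of_oriented_gaps[OF sg range proper gap])
qed

lemma coprime_mult_mult_Suc:
  fixes n d M :: nat
  assumes "n dvd M"
  shows "coprime (n * M) (d * M + 1)"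
proof -
  have "coprime (d * M + 1) (d * M)" by (rule coprime_add_one_left)
  then have M: "coprime (d * M + 1) M" by simp
  then have "coprime (d * M + 1) n" using assms coprime_divisors[of "d * M + 1" "d * M + 1" n M] by simp
  then show ?thesis using M by (simp add: coprime_commute)
qed

lemma better_ratio_of_no_tight_reach:
  assumes sg: "simple_graph V E" and c: "nd_coloring V E n d c" and d: "0 < d"
    and edge: "E u0 v0" and disj: "V \<inter> tight_reach E n d c = {}"
  shows "\<exists>N D. nd_colorable V E N D \<and> real N / real D < real n / real d"
proof -
  have uv0: "u0 \<in> V" "v0 \<in> V" using simple_graph_edgeD[OF sg edge] by simp_all
  then have n: "0 < n" using nd_coloring_range[OF c] by fastforce
  define M where "M = n * card V"
  \<comment> \<open>M exceeds every tight-walk length, and n dvd M keeps n M and d M + 1 coprime.\<close>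
  have "card V \<le> M" using n unfolding M_def by simp
  then have L: "longest_tight_walk E n d c v < M" if "v \<in> V" for v
    using longest_tight_walk_bounded(2)[OF sg disj that] by linarith
  define N where "N = n * M"
  define D where "D = d * M + 1"
  have c': "nd_coloring V E N D (\<lambda>v. M * c v - longest_tight_walk E n d c v)"
    unfolding N_def D_def using L longest_tight_walk_step[OF sg disj]
    by (intro nd_coloring_refine[OF sg c d]) auto
  have "nd_colorable V E N D"
    unfolding nd_colorable_def
  proof (intro conjI exI)
    show "2 * D \<le> N" using nd_coloring_two_d_le[OF c' edge uv0] .
    then show "0 < N" "0 < D" unfolding D_def by simp_all
    have "coprime N D" unfolding N_def D_def M_def by (rule coprime_mult_mult_Suc) simp
    then show "gcd N D = 1" by simp
  qed (rule c')
  moreover have "real N / real D < real n / real d"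
  proof -
    have "N * d < n * D" unfolding N_def D_def using n by (simp add: algebra_simps)
    then have "real N * real d < real n * real D" by (metis of_nat_less_iff of_nat_mult)
    moreover have "0 < D" unfolding D_def by simp
    ultimately show ?thesis using d by (simp add: divide_simps)
  qed
  ultimately show ?thesis by blast
qed

text \<open>Adds t cyclically to the colors outside R; colors live in 1..n, hence the shifts by one.\<close>
definition rotate_outside :: "'a set \<Rightarrow> nat \<Rightarrow> nat \<Rightarrow> ('a \<Rightarrow> nat) \<Rightarrow> 'a \<Rightarrow> nat" where
  "rotate_outside R n t c v = (if v \<in> R then c v else nat ((int (c v) - 1 + int t) mod int n) + 1)"

lemma rotate_outside_mod:
  assumes "0 < n"
  shows "int (rotate_outside R n t c v) mod int n = (int (c v) + (if v \<in> R then 0 else int t)) mod int n"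
proof (cases "v \<in> R")
  case False
  then have "int (rotate_outside R n t c v) = (int (c v) - 1 + int t) mod int n + 1"
    using assms unfolding rotate_outside_def by simp
  then show ?thesis using False by (simp add: mod_add_left_eq)
qed (simp add: rotate_outside_def)

lemma rotate_outside_diff_mod:
  assumes "0 < n"
  shows "(int (rotate_outside R n t c u) - int (rotate_outside R n t c v)) mod int n =
    (int (c u) - int (c v) + (if u \<in> R then 0 else int t) - (if v \<in> R then 0 else int t)) mod int n"
proof -
  let ?s = "\<lambda>v. if v \<in> R then 0 else int t"
  have "(int (rotate_outside R n t c u) - int (rotate_outside R n t c v)) mod int n =
      (int (rotate_outside R n t c u) mod int n - int (rotate_outside R n t c v) mod int n) mod int n"
    by (rule mod_diff_eq[symmetric])
  also have "\<dots> = ((int (c u) + ?s u) mod int n - (int (c v) + ?s v) mod int n) mod int n"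
    by (simp only: rotate_outside_mod[OF assms])
  also have "\<dots> = ((int (c u) + ?s u) - (int (c v) + ?s v)) mod int n"
    by (rule mod_diff_eq)
  finally show ?thesis by (simp add: algebra_simps)
qed

lemma rotate_outside_entering_diff:
  assumes n: "0 < n" and "x \<notin> R" "w \<in> R" and t: "int t \<le> (int (c w) - int (c x)) mod int n"
  shows "(int (rotate_outside R n t c w) - int (rotate_outside R n t c x)) mod int n =
    (int (c w) - int (c x)) mod int n - int t"
proof -
  have "(int (rotate_outside R n t c w) - int (rotate_outside R n t c x)) mod int n =
      ((int (c w) - int (c x)) mod int n - int t) mod int n"
    using assms by (simp add: rotate_outside_diff_mod[OF n] mod_diff_left_eq)
  also have "\<dots> = (int (c w) - int (c x)) mod int n - int t"
    using n t pos_mod_bound[of "int n" "int (c w) - int (c x)"] by (intro mod_pos_pos_trivial) linarith+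
  finally show ?thesis .
qed

lemma nd_coloring_rotate_outside:
  assumes sg: "simple_graph V E" and c: "nd_coloring V E n d c" and d: "0 < d" and n: "0 < n"
    and cross: "\<And>x w. x \<in> V - R \<Longrightarrow> w \<in> R \<Longrightarrow> E x w \<Longrightarrow>
       int d + int t \<le> (int (c w) - int (c x)) mod int n"
  shows "nd_coloring V E n d (rotate_outside R n t c)"
proof -
  have cross': "circ_far n d (int (rotate_outside R n t c w) - int (rotate_outside R n t c x))"
    if "x \<in> V - R" "w \<in> R" "w \<in> V" "E x w" for x w
  proof -
    have "circ_far n d (int (c w) - int (c x))"
      using nd_coloring_circ_far[OF c d] simple_graph_edgeD(3)[OF sg] that by blast
    moreover have "int t \<le> (int (c w) - int (c x)) mod int n" using cross[OF that(1,2,4)] by linarith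
    ultimately show ?thesis
      using rotate_outside_entering_diff[OF n _ that(2)] that(1) cross[OF that(1,2,4)]
      unfolding circ_far_def by auto
  qed
  show ?thesis
    unfolding nd_coloring_iff_circ_far[OF d]
  proof (intro conjI ballI impI)
    fix v assume "v \<in> V"
    moreover have "0 \<le> (int (c v) - 1 + int t) mod int n" "(int (c v) - 1 + int t) mod int n < int n"
      using n by simp_all
    ultimately show "rotate_outside R n t c v \<in> {1..n}"
      using nd_coloring_range[OF c] unfolding rotate_outside_def by (auto simp: Suc_le_eq nat_less_iff)
  next
    fix u v assume uv: "u \<in> V" "v \<in> V" "E u v"
    consider "u \<in> R \<longleftrightarrow> v \<in> R" | "u \<notin> R" "v \<in> R" | "u \<in> R" "v \<notin> R" by blast
    then show "circ_far n d (int (rotate_outside R n t c u) - int (rotate_outside R n t c v))"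
    proof cases
      case 1
      then have "(int (rotate_outside R n t c u) - int (rotate_outside R n t c v)) mod int n =
          (int (c u) - int (c v)) mod int n"
        by (simp add: rotate_outside_diff_mod[OF n])
      then show ?thesis using nd_coloring_circ_far[OF c d uv] circ_far_mod_cong by blast
    next
      case 2
      then show ?thesis using cross' uv circ_far_uminus[OF d] by (metis minus_diff_eq DiffI)
    next
      case 3
      then show ?thesis using cross' uv simple_graph_edgeD(3)[OF sg] by blast
    qed
  qed
qed

text \<open>The edges entering the tight reach from outside all have slack; rotating the outside colors
  by the least slack keeps the coloring proper and makes one of these edges tight.\<close>
lemma tight_reach_grows:
  assumes sg: "simple_graph V E" and conn: "connected_graph V E" and c: "nd_coloring V E n d c"
    and d: "0 < d" and n: "2 * d \<le> n"
    and inside: "V \<inter> tight_reach E n d c \<noteq> {}" and outside: "V - tight_reach E n d c \<noteq> {}"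
  shows "\<exists>c'. nd_coloring V E n d c' \<and> V \<inter> tight_reach E n d c \<subset> V \<inter> tight_reach E n d c'"
proof -
  define R where "R = tight_reach E n d c"
  define \<delta> where "\<delta> x w = (int (c w) - int (c x)) mod int n" for x w
  define X where "X = {(x, w). x \<in> V - R \<and> w \<in> V \<inter> R \<and> E x w}"
  have n0: "0 < n" using d n by simp
  have slack: "int d < \<delta> x w" if "(x, w) \<in> X" for x w
    using that tight_reach_entering_slack[OF sg c d] unfolding X_def R_def \<delta>_def by blast
  have "finite X" using sg unfolding simple_graph_def X_def
    by (auto intro: finite_subset[of _ "V \<times> V"])
  moreover have "X \<noteq> {}"
    using connected_graph_cut_edge[OF conn] inside outside unfolding X_def R_def by blast
  ultimately have "Min (case_prod \<delta> ` X) \<in> case_prod \<delta> ` X" by (intro Min_in) auto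
  then obtain x0 w0 where x0w0: "(x0, w0) \<in> X" and x0w0_min: "\<delta> x0 w0 = Min (case_prod \<delta> ` X)"
    by auto
  have min: "\<delta> x0 w0 \<le> \<delta> x w" if "(x, w) \<in> X" for x w
    unfolding x0w0_min using \<open>finite X\<close> that by (intro Min_le) force+
  define t where "t = nat (\<delta> x0 w0 - int d)"
  have t: "int t = \<delta> x0 w0 - int d" using slack[OF x0w0] unfolding t_def by simp
  define c' where "c' = rotate_outside R n t c"
  have c': "nd_coloring V E n d c'"
    unfolding c'_def
  proof (rule nd_coloring_rotate_outside[OF sg c d n0])
    fix x w assume "x \<in> V - R" "w \<in> R" "E x w"
    then have "(x, w) \<in> X" using simple_graph_edgeD[OF sg] unfolding X_def by blast
    then show "int d + int t \<le> (int (c w) - int (c x)) mod int n"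
      using min t unfolding \<delta>_def by fastforce
  qed
  have R: "R \<subseteq> tight_reach E n d c'"
    unfolding R_def by (rule tight_reach_mono_on) (simp add: c'_def rotate_outside_def R_def)
  have "tight_edge E n d c' x0 w0"
  proof -
    have "(int (c' w0) - int (c' x0)) mod int n = \<delta> x0 w0 - int t"
      using x0w0 t slack[OF x0w0] rotate_outside_entering_diff[OF n0, of x0 R w0 t c]
      unfolding c'_def X_def \<delta>_def by simp
    then show ?thesis using x0w0 t unfolding X_def tight_edge_def by simp
  qed
  moreover have "w0 \<in> tight_reach E n d c'" using x0w0 R unfolding X_def by auto
  ultimately have "x0 \<in> tight_reach E n d c'" by (rule tight_reach_prepend)
  then have "V \<inter> R \<subset> V \<inter> tight_reach E n d c'" using x0w0 R unfolding X_def by blast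
  then show ?thesis using c' unfolding R_def by blast
qed

lemma optimal_nd_coloring_tight_everywhere:
  assumes sg: "simple_graph V E" and conn: "connected_graph V E" and c: "nd_coloring V E n d c"
    and d: "0 < d" and n: "2 * d \<le> n" and edge: "E u0 v0"
    and opt: "\<And>N D. nd_colorable V E N D \<Longrightarrow> real n / real d \<le> real N / real D"
  shows "\<exists>c. nd_coloring V E n d c \<and> V \<subseteq> tight_reach E n d c"
proof -
  have inside: "V \<inter> tight_reach E n d c' \<noteq> {}" if "nd_coloring V E n d c'" for c'
    using better_ratio_of_no_tight_reach[OF sg that d edge] opt by fastforce
  have finV: "finite V" using sg unfolding simple_graph_def by blast
  show ?thesis
    using c
  proof (induction "card (V - tight_reach E n d c)" arbitrary: c rule: less_induct)
    case less
    show ?case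
    proof (cases "V \<subseteq> tight_reach E n d c")
      case False
      then obtain c' where c': "nd_coloring V E n d c'"
        and grows: "V \<inter> tight_reach E n d c \<subset> V \<inter> tight_reach E n d c'"
        using tight_reach_grows[OF sg conn less.prems d n inside[OF less.prems]] by blast
      then have "card (V - tight_reach E n d c') < card (V - tight_reach E n d c)"
        using finV by (intro psubset_card_mono) auto
      then show ?thesis using less.hyps c' by blast
    qed (use less.prems in blast)
  qed
qed

section \<open>The circular chromatic number is attained\<close>

lemma scaled_floor_gap_bounds:
  fixes n n' d d' a b :: int
  assumes bz: "n * d' = n' * d + 1" and d: "0 < d" and n: "0 < n" and n': "0 \<le> n'"
    and b: "1 \<le> b" "b < a" and lo: "d \<le> a - b" and hi: "a - b \<le> n - d"
    and na: "\<not> n dvd a * n'" and nb: "\<not> n dvd b * n'"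
  shows "d' \<le> a * n' div n - b * n' div n \<and> a * n' div n - b * n' div n \<le> n' - d'"
proof -
  define q where "q = b * n' div n"
  define s where "s = b * n' mod n"
  have bq: "b * n' = q * n + s" unfolding q_def s_def by simp
  have "s \<noteq> 0" "0 \<le> s" "s < n" using nb n unfolding s_def by (simp_all add: dvd_eq_mod_eq_0)
  then have s: "0 < s" "s < n" by simp_all
  have ab: "a * n' = b * n' + (a - b) * n'" by (simp add: algebra_simps)
  have l1: "d * n' \<le> (a - b) * n'" using lo n' by (simp add: mult_right_mono)
  have l2: "(a - b) * n' \<le> (n - d) * n'" using hi n' by (simp add: mult_right_mono)
  have e1: "d * n' = n * d' - 1" using bz by (simp add: algebra_simps)
  have e2: "(n - d) * n' = n * (n' - d') + 1" using bz by (simp add: algebra_simps)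
  have "(q + d') * n \<le> a * n'" using ab bq l1 e1 s by (simp add: algebra_simps)
  then have "(q + d') * n div n \<le> a * n' div n" using n by (intro zdiv_mono1) auto
  then have lower: "q + d' \<le> a * n' div n" using n by simp
  have upper: "a * n' div n \<le> q + n' - d'"
  proof (rule ccontr)
    assume "\<not> ?thesis"
    then have "(q + n' - d' + 1) * n \<le> (a * n' div n) * n" using n by (simp add: mult_right_mono)
    also have "\<dots> \<le> a * n'" using n div_mult_mod_eq[of "a * n'" n] pos_mod_sign[of n "a * n'"] by linarith
    finally have "(q + n' - d' + 1) * n \<le> a * n'" .
    moreover have "a * n' \<le> q * n + s + n * (n' - d') + 1" using ab bq l2 e2 by simp
    ultimately have "a * n' = (q + n' - d' + 1) * n" using s by (simp add: algebra_simps)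
    then show False using na by simp
  qed
  show ?thesis using lower upper unfolding q_def by linarith
qed

lemma bezout_nat_bounded:
  fixes n d :: nat
  assumes "0 < n" "0 < d" "gcd n d = 1"
  shows "\<exists>d' n'. 0 < d' \<and> d' \<le> d \<and> n * d' = n' * d + 1"
proof (cases "d = 1")
  case True
  then show ?thesis by (intro exI[of _ 1] exI[of _ "n - 1"]) (use assms in auto)
next
  case False
  then have d: "1 < d" using assms by simp
  then have "n \<noteq> 0" using assms by auto
  then obtain x y where "n * x = d * y + 1" using bezout_nat[of n d] assms by auto
  then have "n * x mod d = 1" using d by (metis mod_mult_self2 mod_less add.commute)
  then have r: "n * (x mod d) mod d = 1" by (simp add: mod_mult_right_eq)
  then have "x mod d \<noteq> 0" by (rule contrapos_pn) simp
  moreover have "n * (x mod d) = n * (x mod d) div d * d + 1" using r by (metis div_mult_mod_eq)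
  ultimately show ?thesis using assms by (intro exI[of _ "x mod d"] exI[of _ "n * (x mod d) div d"]) auto
qed

lemma coprime_of_bezout_nat:
  fixes a b x y :: nat
  assumes eq: "a * x = b * y + 1"
  shows "coprime a b" and "coprime b x"
proof -
  have unit: "p dvd 1" if "p dvd a * x" "p dvd b * y" for p
  proof -
    have "p dvd b * y + 1" using that(1) unfolding eq .
    then show ?thesis using dvd_add_right_iff[OF that(2), of 1] by blast
  qed
  show "coprime a b"
  proof (rule coprimeI)
    fix p assume "p dvd a" "p dvd b"
    then show "is_unit p" using unit[OF dvd_mult2 dvd_mult2] by blast
  qed
  show "coprime b x"
  proof (rule coprimeI)
    fix p assume "p dvd b" "p dvd x"
    then show "is_unit p" using unit[OF dvd_mult dvd_mult2] by blast
  qed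
qed

lemma exists_unused_color:
  assumes "finite V" "card V < n"
  shows "\<exists>a\<in>{1..n}. a \<notin> c ` V"
proof (rule ccontr)
  assume "\<not> ?thesis"
  then have "card {1..n} \<le> card (c ` V)" using assms(1) by (intro card_mono) auto
  then show False using assms card_image_le[OF assms(1), of c] by simp
qed

lemma mod_unused_color_pos:
  assumes "x \<in> {1..n}" "a \<in> {1..n}" "x \<noteq> a"
  shows "0 < (int x - int a) mod int n"
proof -
  have ne: "int x - int a \<noteq> 0" and lt: "\<bar>int x - int a\<bar> < int n" using assms by auto
  have "\<not> int n dvd int x - int a"
  proof
    assume "int n dvd int x - int a"
    then have "\<bar>int n\<bar> \<le> \<bar>int x - int a\<bar>" by (rule dvd_imp_le_int[OF ne])
    then show False using lt by simp
  qed
  then have "(int x - int a) mod int n \<noteq> 0" by (simp add: dvd_eq_mod_eq_0)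
  moreover have "0 \<le> (int x - int a) mod int n" using assms by simp
  ultimately show ?thesis by linarith
qed

lemma nd_coloring_scale_down:
  fixes j :: "'a \<Rightarrow> int"
  assumes sg: "simple_graph V E" and d: "0 < d" and n': "0 < n'"
    and bz: "n * d' = n' * d + 1" and cop: "coprime n n'"
    and j: "\<And>v. v \<in> V \<Longrightarrow> 1 \<le> j v \<and> j v < int n"
    and far: "\<And>u v. u \<in> V \<Longrightarrow> v \<in> V \<Longrightarrow> E u v \<Longrightarrow> circ_far n d (j u - j v)"
  shows "nd_coloring V E n' d' (\<lambda>v. nat (j v * int n' div int n) + 1)"
proof -
  let ?c = "\<lambda>v. nat (j v * int n' div int n) + 1"
  have ndvd: "\<not> int n dvd j v * int n'" if "v \<in> V" for v
  proof
    assume "int n dvd j v * int n'"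
    then have "int n dvd j v" using cop by (simp add: coprime_dvd_mult_left_iff)
    then show False using j[OF that] zdvd_imp_le[of "int n" "j v"] by linarith
  qed
  have range: "0 \<le> j v * int n' div int n \<and> j v * int n' div int n < int n'" if "v \<in> V" for v
  proof -
    have "j v * int n' < int n' * int n" using j[OF that] n' by (simp add: mult.commute)
    then show ?thesis using j[OF that] by (simp add: zdiv_less_of_less_mult pos_imp_zdiv_nonneg_iff)
  qed
  have gap: "int d' \<le> int (?c u) - int (?c v) \<and> int (?c u) - int (?c v) \<le> int n' - int d'"
    if uv: "u \<in> V" "v \<in> V" "E u v" and less: "j v < j u" for u v
  proof -
    have "\<bar>j u - j v\<bar> < int n" using j[OF uv(1)] j[OF uv(2)] by auto
    then have "int d \<le> j u - j v" "j u - j v \<le> int n - int d"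
      using far[OF uv] circ_far_iff_abs[OF d] less by auto
    moreover have "int n * int d' = int n' * int d + 1" using bz by (metis of_nat_1 of_nat_add of_nat_mult)
    ultimately have "int d' \<le> j u * int n' div int n - j v * int n' div int n \<and>
        j u * int n' div int n - j v * int n' div int n \<le> int n' - int d'"
      using d j[OF uv(1)] j[OF uv(2)] less ndvd[OF uv(1)] ndvd[OF uv(2)]
      by (intro scaled_floor_gap_bounds) auto
    then show ?thesis using range[OF uv(1)] range[OF uv(2)] by simp
  qed
  have "?c v \<in> {1..n'}" if "v \<in> V" for v using range[OF that] by (auto simp: nat_less_iff Suc_le_eq)
  moreover have "j u \<noteq> j v" if "u \<in> V" "v \<in> V" "E u v" for u v
    using far[OF that] d unfolding circ_far_def by auto
  ultimately show ?thesis using sg gap by (intro nd_coloring_of_oriented_gaps[where key = j]) auto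
qed

text \<open>An unused color a cuts the circle open: the colors become j v \<in> [1, n-1], and compressing
  them by the factor n'/n, where n d' = n' d + 1, gives an (n',d')-coloring.\<close>
lemma nd_colorable_smaller_numerator:
  assumes sg: "simple_graph V E" and edge: "E u0 v0" and col: "nd_colorable V E n d"
    and big: "card V < n"
  shows "\<exists>n' d'. nd_colorable V E n' d' \<and> n' < n \<and> real n' / real d' \<le> real n / real d"
proof -
  obtain c where c: "nd_coloring V E n d c" and n: "0 < n" and d: "0 < d" and g: "gcd n d = 1"
    using col unfolding nd_colorable_def by auto
  have "finite V" using sg unfolding simple_graph_def by blast
  then obtain a where a: "a \<in> {1..n}" "a \<notin> c ` V" using exists_unused_color big by blast
  define j where "j v = (int (c v) - int a) mod int n" for v
  have j: "1 \<le> j v \<and> j v < int n" if "v \<in> V" for v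
  proof -
    have "c v \<noteq> a" using a(2) that by blast
    then show ?thesis using mod_unused_color_pos[OF nd_coloring_range[OF c that] a(1)] n
      unfolding j_def by simp
  qed
  have far: "circ_far n d (j u - j v)" if "u \<in> V" "v \<in> V" "E u v" for u v
  proof -
    have "(j u - j v) mod int n = (int (c u) - int (c v)) mod int n"
      unfolding j_def by (simp add: mod_diff_eq)
    then show ?thesis using nd_coloring_circ_far[OF c d that] circ_far_mod_cong by blast
  qed
  obtain d' n' where d': "0 < d'" "d' \<le> d" and bz: "n * d' = n' * d + 1"
    using bezout_nat_bounded[OF n d g] by blast
  have "n * d' \<le> n * d" using d' by simp
  then have "n' * d < n * d" using bz by linarith
  then have n'n: "n' < n" by simp
  have n': "0 < n'"
  proof (rule ccontr)
    assume "\<not> 0 < n'"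
    then have "n * d' = 1" using bz by simp
    then show False using col unfolding nd_colorable_def by simp
  qed
  note cop = coprime_of_bezout_nat[OF bz]
  have c': "nd_coloring V E n' d' (\<lambda>v. nat (j v * int n' div int n) + 1)"
    by (rule nd_coloring_scale_down[OF sg d n' bz cop(1) j far])
  have "nd_colorable V E n' d'"
    unfolding nd_colorable_def
    using n' d' cop(2) c' nd_coloring_two_d_le[OF c' edge simple_graph_edgeD(1,2)[OF sg edge]]
    by (auto simp: coprime_iff_gcd_eq_1)
  moreover have "real n' / real d' \<le> real n / real d"
  proof -
    have "n' * d \<le> n * d'" using bz by simp
    then have "real n' * real d \<le> real n * real d'" by (metis of_nat_le_iff of_nat_mult)
    then show ?thesis using d d' by (simp add: divide_simps)
  qed
  ultimately show ?thesis using n'n by blast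
qed

lemma nd_colorable_bounded_numerator:
  assumes sg: "simple_graph V E" and edge: "E u0 v0" and col: "nd_colorable V E n d"
  shows "\<exists>n' d'. nd_colorable V E n' d' \<and> n' \<le> card V \<and> real n' / real d' \<le> real n / real d"
  using col
proof (induction n arbitrary: d rule: less_induct)
  case (less n)
  show ?case
  proof (cases "n \<le> card V")
    case False
    then obtain n' d' where "nd_colorable V E n' d'" "n' < n" and le: "real n' / real d' \<le> real n / real d"
      using nd_colorable_smaller_numerator[OF sg edge less.prems] by auto
    then obtain n'' d'' where "nd_colorable V E n'' d''" "n'' \<le> card V"
      "real n'' / real d'' \<le> real n' / real d'"
      using less.IH by blast
    then show ?thesis using le by (intro exI[of _ n''] exI[of _ d'']) simp
  qed (use less.prems in blast)
qed

lemma optimal_nd_colorable_exists: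
  assumes sg: "simple_graph V E" and edge: "E u0 v0" and col: "nd_colorable V E n d"
  shows "\<exists>n0 d0. nd_colorable V E n0 d0 \<and>
           (\<forall>N D. nd_colorable V E N D \<longrightarrow> real n0 / real d0 \<le> real N / real D)"
proof -
  define T where "T = {(n', d'). nd_colorable V E n' d' \<and> n' \<le> card V}"
  define ratio where "ratio = (\<lambda>(n', d'). real n' / real d')"
  have "T \<subseteq> {0..card V} \<times> {0..card V}" unfolding T_def nd_colorable_def by auto
  then have "finite T" by (rule finite_subset) simp
  then have fin: "finite (ratio ` T)" by simp
  have below: "\<exists>p\<in>T. ratio p \<le> real N / real D" if "nd_colorable V E N D" for N D
    using nd_colorable_bounded_numerator[OF sg edge that] unfolding T_def ratio_def by auto
  then have "ratio ` T \<noteq> {}" using col by blast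
  then have "Min (ratio ` T) \<in> ratio ` T" using fin by (rule Min_in[rotated])
  then obtain n0 d0 where p0: "(n0, d0) \<in> T" "ratio (n0, d0) = Min (ratio ` T)" by auto
  have "real n0 / real d0 \<le> real N / real D" if ND: "nd_colorable V E N D" for N D
  proof -
    obtain p where "p \<in> T" "ratio p \<le> real N / real D" using below[OF ND] by blast
    moreover have "Min (ratio ` T) \<le> ratio p" using fin \<open>p \<in> T\<close> by simp
    ultimately show ?thesis using p0(2) unfolding ratio_def by simp
  qed
  then show ?thesis using p0(1) unfolding T_def by blast
qed

lemma circular_chromatic_number_eq_optimal:
  assumes "nd_colorable V E n d"
    and "\<And>N D. nd_colorable V E N D \<Longrightarrow> real n / real d \<le> real N / real D"
  shows "circular_chromatic_number V E = real n / real d"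
  unfolding circular_chromatic_number_def
  by (rule cInf_eq_minimum) (use assms in \<open>auto simp: nd_colorable_def\<close>)

lemma optimal_tight_nd_coloring:
  assumes sg: "simple_graph V E" and conn: "connected_graph V E" and chi: "2 \<le> chromatic_number V E"
  shows "\<exists>n0 d0 c. 0 < n0 \<and> 0 < d0 \<and> circular_chromatic_number V E = real n0 / real d0 \<and>
           nd_coloring V E n0 d0 c \<and> V \<subseteq> tight_reach E n0 d0 c"
proof -
  obtain f where "coloring V E (chromatic_number V E) f" using chromatic_number_coloring[OF sg] by blast
  then have "nd_colorable V E (chromatic_number V E) 1" using chi by (rule nd_colorable_of_coloring)
  moreover obtain u0 v0 where edge: "E u0 v0" using edge_if_chromatic_number_ge_2[OF chi] by blast
  ultimately obtain n0 d0 where col0: "nd_colorable V E n0 d0"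
    and opt: "\<And>N D. nd_colorable V E N D \<Longrightarrow> real n0 / real d0 \<le> real N / real D"
    using optimal_nd_colorable_exists[OF sg edge] by blast
  then have "circular_chromatic_number V E = real n0 / real d0"
    by (rule circular_chromatic_number_eq_optimal)
  moreover obtain c0 where "nd_coloring V E n0 d0 c0" and "0 < n0" "0 < d0" "2 * d0 \<le> n0"
    using col0 unfolding nd_colorable_def by auto
  moreover from calculation obtain c where "nd_coloring V E n0 d0 c" "V \<subseteq> tight_reach E n0 d0 c"
    using optimal_nd_coloring_tight_everywhere[OF sg conn _ _ _ edge opt] by blast
  ultimately show ?thesis by blast
qed

lemma rainbow_fraction_bound:
  fixes k n d v s :: nat
  assumes k: "1 \<le> k" and d: "0 < d" and lo: "(k - 1) * d < n" and count: "k * (n - (k - 1) * d) * v \<le> s * n"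
  shows "real k * (real n / real d + 1 - real k) / (real n / real d) * real v \<le> real s"
proof -
  have n: "0 < n" using lo by simp
  have gap: "real (n - (k - 1) * d) = real n + real d - real k * real d"
    using lo k by (simp add: algebra_simps)
  have "real k * (real n / real d + 1 - real k) / (real n / real d) * real v =
      real k * (real n + real d - real k * real d) * real v / real n"
    using d n by (simp add: field_simps)
  also have "\<dots> = real (k * (n - (k - 1) * d) * v) / real n"
    by (simp only: of_nat_mult gap)
  also have "\<dots> \<le> real s" using count n by (simp add: divide_le_eq flip: of_nat_mult)
  finally show ?thesis .
qed

theorem theorem2:
  fixes V :: "'a set" and E :: "'a \<Rightarrow> 'a \<Rightarrow> bool" and k n d :: nat
  assumes "0 < k" "0 < n" "0 < d" "2 * d \<le> n" "gcd n d = 1"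
    and "real n / real d < real k"
    and "simple_graph V E" and "connected_graph V E"
    and "chromatic_number V E = k"
    and "circular_chromatic_number V E = real n / real d"
  shows "\<exists>f S. coloring V E k f \<and> S \<subseteq> V \<and>
           real (card S) \<ge>
             (real (chromatic_number V E) *
                (circular_chromatic_number V E + 1 - real (chromatic_number V E))
              / circular_chromatic_number V E) * real (card V) \<and>
           (\<forall>u\<in>S. \<exists>ps. rainbow_path V E f ps \<and> length ps = k \<and> begins_at ps u) \<and>
           (\<forall>v\<in>V - S. \<exists>ps. rainbow_path V E f ps \<and> length ps = k - 1 \<and> begins_at ps v)"
proof -
  note sg = assms(7) and conn = assms(8) and chi = assms(9) and circ = assms(10)
  have "2 \<le> real n / real d" using assms(3,4) by (simp add: le_divide_eq flip: of_nat_mult)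
  then have k: "2 \<le> k" using assms(6) by linarith
  obtain n0 d0 c where n0: "0 < n0" and d0: "0 < d0" and ratio: "real n / real d = real n0 / real d0"
    and c: "nd_coloring V E n0 d0 c" and reach: "V \<subseteq> tight_reach E n0 d0 c"
    using optimal_tight_nd_coloring[OF sg conn, unfolded chi circ, OF k] by blast
  have "real n0 / real d0 < real k" using ratio assms(6) by simp
  then have "real n0 < real k * real d0" using d0 by (simp add: divide_less_eq)
  then have hi: "n0 < k * d0" by (simp flip: of_nat_mult)
  have lo: "(k - 1) * d0 < n0"
    using chromatic_number_le_of_nd_coloring[OF c d0 n0, of "k - 1"] chi k by linarith
  obtain f S where f: "coloring V E k f" and S: "S \<subseteq> V"
    and count: "k * (n0 - (k - 1) * d0) * card V \<le> card S * n0"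
    and full: "\<forall>u\<in>S. \<exists>ps. rainbow_path V E f ps \<and> length ps = k \<and> begins_at ps u"
    and short: "\<forall>v\<in>V - S. \<exists>ps. rainbow_path V E f ps \<and> length ps = k - 1 \<and> begins_at ps v"
    using rainbow_coloring_of_tight_reach[OF sg c d0 k lo hi reach] by blast
  have "real k * (real n0 / real d0 + 1 - real k) / (real n0 / real d0) * real (card V) \<le> real (card S)"
    using rainbow_fraction_bound[OF _ d0 lo count] k by simp
  then show ?thesis unfolding chi circ ratio using f S full short by blast
qed

end
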